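(* Let $L\ge 18$. Then: (i) $M_S(L,3)=(L-4)/8$ if $L\equiv 4\pmod 8$; (ii) $M_S(L,3)=(L-2)/8$ if $L=2^{2t+1}+2$ for some integer $t\ge1$, or $L=2^{2t}-2^{t+1}+2$ for some integer $t\ge2$, or $L=2^{2t}+2^{t+1}+2$ for some integer $t\ge1$; (iii) $M_S(L,3)=(L+2)/8$ if $L=2^{2^t+1}-2$ for some integer $t\ge2$.
   Context: $\mathcal{P}(L,\omega)$ is the set of $\omega$-element subsets of $\mathbb{Z}_L$. For $\mathcal{I}\in\mathcal{P}(L,\omega)$: $d(\mathcal{I})=\{a-b \bmod L: a,b\in\mathcal{I}\}$, $d^*(\mathcal{I})=d(\mathcal{I})\setminus\{0\}$. A strongly conflict-avoiding code (SCAC) of length $L$ and weight $\omega$ is a set $\mathcal{C}=\{\mathcal{I}_1,\dots,\mathcal{I}_M\}\subseteq\mathcal{P}(L,\omega)$ such that for all $j\ne k$, $\big(d^*(\mathcal{I}_j)\cup(d^*(\mathcal{I}_j)+1)\cup(d^*(\mathcal{I}_j)-1)\big)\cap d(\mathcal{I}_k)=\emptyset$ (shifts mod $L$). $M_S(L,\omega)$ denotes the maximum number of codewords in an SCAC of length $L$ and weight $\omega$. *)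

theory Defs
  imports Main
begin

text \<open>Z_L is represented by the integers {0..<L}; all arithmetic is taken mod L.\<close>

definition Pset :: "nat \<Rightarrow> nat \<Rightarrow> int set set" where
  "Pset L w = {I. I \<subseteq> {0..<int L} \<and> card I = w}"

definition dset :: "nat \<Rightarrow> int set \<Rightarrow> int set" where
  "dset L I = {(a - b) mod int L | a b. a \<in> I \<and> b \<in> I}"

definition dstar :: "nat \<Rightarrow> int set \<Rightarrow> int set" where
  "dstar L I = dset L I - {0}"

definition shiftL :: "nat \<Rightarrow> int \<Rightarrow> int set \<Rightarrow> int set" where
  "shiftL L c A = (\<lambda>x. (x + c) mod int L) ` A"

definition is_SCAC :: "nat \<Rightarrow> nat \<Rightarrow> int set set \<Rightarrow> bool" where
  "is_SCAC L w C \<longleftrightarrow> C \<subseteq> Pset L w \<and>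
     (\<forall>I\<in>C. \<forall>J\<in>C. I \<noteq> J \<longrightarrow>
        (dstar L I \<union> shiftL L 1 (dstar L I) \<union> shiftL L (-1) (dstar L I)) \<inter> dset L J = {})"

definition M_S :: "nat \<Rightarrow> nat \<Rightarrow> nat" where
  "M_S L w = Max {card C | C. is_SCAC L w C}"

end

theory Submission
  imports Defs "HOL-Number_Theory.Cong"
begin

text \<open>
  In a code with at least two codewords, every codeword \<open>{x, y, z}\<close> has its three
  gaps \<open>y - x\<close>, \<open>z - y\<close>, \<open>L - (z - x)\<close> at least 2, because \<open>0\<close> lies in every difference set and must
  avoid the \<open>\<plusminus>1\<close> shifts of \<open>d*(I)\<close>. Its short differences \<open>min g (L - g)\<close> lie in \<open>[2, L / 2]\<close>, and
  short differences of distinct codewords are at distance at least 2, so the blocks \<open>{a, a + 1}\<close>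
  they span are disjoint subsets of \<open>{2, ..., L / 2 + 1}\<close>. A codeword spans at least four points
  unless one of its short differences \<open>h\<close> has \<open>\<bar>3 h - L\<bar> \<le> 1\<close>, which happens for at most one
  codeword; hence \<open>4 M \<le> L / 2 + 2\<close>. If \<open>4\<close> divides \<open>L\<close> this is improved by a parity argument.

  The codewords \<open>{0, 2 u, 4 u}\<close> have even differences, so for even \<open>L\<close> only their
  difference sets need to be disjoint. For \<open>L \<equiv> 4 (mod 8)\<close> the odd \<open>u < L / 8\<close> do. For \<open>L = 2 N\<close>
  with \<open>N\<close> odd it suffices that no chosen \<open>u, v \<in> (0, N / 2)\<close> satisfy \<open>u \<equiv> \<plusminus>2 v (mod N)\<close>. Such a
  set of size \<open>(N - 1) / 4\<close> is one half of a colour class of a 2-colouring of the nonzero residues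
  in which doubling changes and negation keeps the colour; it exists when \<open>x \<equiv> \<plusminus>2 ^ j x\<close> forces
  \<open>j\<close> to be even, which is the case if \<open>N\<close> divides \<open>2 ^ k + 1\<close> with \<open>k\<close> even, and, for the residues
  \<open>x\<close> with \<open>N\<close> not dividing \<open>3 x\<close>, if \<open>N\<close> divides \<open>2 ^ 2 ^ t - 1\<close>; in the latter case \<open>u = N / 3\<close> can be
  added. The lengths in (ii) and (iii) are of these forms.
\<close>

lemma uminus_mod_eq: "0 < x \<Longrightarrow> x < N \<Longrightarrow> (- x) mod N = N - x"
  for x N :: int
  by (simp add: zmod_zminus1_eq_if)

lemma odd_dvd_double_iff:
  fixes N a :: int
  assumes "odd N"
  shows "N dvd 2 * a \<longleftrightarrow> N dvd a"
proof
  assume "N dvd 2 * a"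
  obtain k where "N = 2 * k + 1"
    using assms by (blast elim: oddE)
  then have "a = (k + 1) * (2 * a) - N * a"
    by (simp add: algebra_simps)
  then show "N dvd a"
    using \<open>N dvd 2 * a\<close> by (metis dvd_diff dvd_mult dvd_triv_left)
qed simp

lemma four_mult_neq: "4 * a \<noteq> 4 * b + (2::int)"
  by presburger

lemma card_multiples_of_four:
  fixes N :: int
  assumes "0 \<le> N"
  shows "finite {a. 2 \<le> a \<and> a \<le> N \<and> 4 dvd a}"
    and "4 * int (card {a. 2 \<le> a \<and> a \<le> N \<and> 4 dvd a}) \<le> N"
proof -
  have sub: "{a. 2 \<le> a \<and> a \<le> N \<and> 4 dvd a} \<subseteq> (\<lambda>k. 4 * k) ` {1..N div 4}"
  proof
    fix a assume "a \<in> {a. 2 \<le> a \<and> a \<le> N \<and> 4 dvd a}"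
    then obtain k where "a = 4 * k" "2 \<le> 4 * k" "4 * k \<le> N"
      by blast
    then show "a \<in> (\<lambda>k. 4 * k) ` {1..N div 4}"
      by (intro image_eqI[of _ _ k]) auto
  qed
  then show "finite {a. 2 \<le> a \<and> a \<le> N \<and> 4 dvd a}"
    by (rule finite_subset) simp
  then have "card {a. 2 \<le> a \<and> a \<le> N \<and> 4 dvd a} \<le> card ((\<lambda>k. 4 * k) ` {1..N div 4})"
    using sub by (intro card_mono) simp_all
  also have "\<dots> \<le> card {1..N div 4}"
    by (rule card_image_le) simp
  finally have "int (card {a. 2 \<le> a \<and> a \<le> N \<and> 4 dvd a}) \<le> N div 4"
    using assms by (simp add: le_nat_iff)
  then show "4 * int (card {a. 2 \<le> a \<and> a \<le> N \<and> 4 dvd a}) \<le> N"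
    by linarith
qed

lemma pow_cong_mult:
  fixes c x n :: int
  assumes "[c ^ a * x = x] (mod n)"
  shows "[c ^ (a * q) * x = x] (mod n)"
proof (induction q)
  case (Suc q)
  have "[c ^ (a * Suc q) * x = c ^ a * x] (mod n)"
    using cong_scalar_left[OF Suc.IH, of "c ^ a"] by (simp add: power_add ac_simps)
  then show ?case
    using assms by (rule cong_trans)
qed simp

lemma pow_cong_gcd:
  fixes c x n :: int
  shows "[c ^ a * x = x] (mod n) \<Longrightarrow> [c ^ b * x = x] (mod n) \<Longrightarrow> [c ^ gcd a b * x = x] (mod n)"
proof (induction a b rule: gcd_nat_induct)
  case (step a b)
  have "c ^ a = c ^ (a mod b) * c ^ (b * (a div b))"
    by (metis div_mult_mod_eq power_add mult.commute)
  then have "[c ^ a * x = c ^ (a mod b) * x] (mod n)"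
    using cong_scalar_left[OF pow_cong_mult[OF step.prems(2)], of "c ^ (a mod b)" "a div b"]
    by (simp add: ac_simps)
  then have "[c ^ (a mod b) * x = x] (mod n)"
    using step.prems(1) by (metis cong_sym cong_trans)
  then show ?case
    using step.IH step.prems(2) step.hyps by (simp add: gcd_non_0_nat)
qed simp

lemma Pset_3_E:
  assumes "I \<in> Pset L 3"
  obtains x y z where "I = {x, y, z}" "0 \<le> x" "x < y" "y < z" "z < int L"
proof -
  define xs where "xs = sorted_list_of_set I"
  have I: "finite I" "card I = 3" "I \<subseteq> {0..<int L}"
    using assms by (auto simp: Pset_def intro: card_ge_0_finite)
  then have "length xs = 3" "set xs = I" "sorted_wrt (<) xs"
    by (simp_all add: xs_def)
  then obtain x y z where "xs = [x, y, z]"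
    by (auto simp: numeral_3_eq_3 length_Suc_conv)
  then show thesis
    using that \<open>set xs = I\<close> \<open>sorted_wrt (<) xs\<close> I(3) by auto
qed

lemma dset_eq_insert_dstar: "I \<noteq> {} \<Longrightarrow> dset L I = insert 0 (dstar L I)"
  by (force simp: dset_def dstar_def)

lemma dstar_three:
  assumes "0 \<le> x" "x < y" "y < z" "z < int L"
  shows "dstar L {x, y, z} =
    {y - x, z - y, int L - (z - x), int L - (y - x), int L - (z - y), z - x}"
proof -
  have neg: "(a - b) mod int L = int L - (b - a)" if "a < b" "b - a < int L" for a b
    using uminus_mod_eq[of "b - a" "int L"] that by simp
  have "dset L {x, y, z} = {(x - x) mod int L, (x - y) mod int L, (x - z) mod int L,
      (y - x) mod int L, (y - y) mod int L, (y - z) mod int L,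
      (z - x) mod int L, (z - y) mod int L, (z - z) mod int L}"
    unfolding dset_def by blast
  also have "\<dots> = {0, y - x, z - y, z - x, int L - (y - x), int L - (z - y), int L - (z - x)}"
    using assms neg[of x y] neg[of y z] neg[of x z] by auto
  finally show ?thesis
    using assms by (auto simp: dstar_def)
qed

lemma scac_separated:
  assumes "is_SCAC L w C" "I \<in> C" "J \<in> C" "I \<noteq> J" "a \<in> dstar L I"
  shows "a \<notin> dset L J" "(a + 1) mod int L \<notin> dset L J" "(a - 1) mod int L \<notin> dset L J"
proof -
  have "(dstar L I \<union> shiftL L 1 (dstar L I) \<union> shiftL L (-1) (dstar L I)) \<inter> dset L J = {}"
    using assms(1-4) unfolding is_SCAC_def by blast
  then show "a \<notin> dset L J" "(a + 1) mod int L \<notin> dset L J" "(a - 1) mod int L \<notin> dset L J"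
    using assms(5) unfolding shiftL_def by auto
qed

definition blocks :: "int set \<Rightarrow> int set" where
  "blocks H = H \<union> (\<lambda>a. a + 1) ` H"

lemma finite_blocks [simp]: "finite H \<Longrightarrow> finite (blocks H)"
  by (simp add: blocks_def)

lemma card_blocks_ge_2:
  assumes "finite H" "h \<in> H"
  shows "2 \<le> card (blocks H)"
proof -
  have "{h, h + 1} \<subseteq> blocks H"
    using assms(2) by (auto simp: blocks_def)
  from card_mono[OF finite_blocks[OF assms(1)] this] show ?thesis by simp
qed

lemma card_blocks_less_3:
  assumes "finite H" "h \<in> H" "card (blocks H) < 3"
  shows "H = {h}"
proof (rule ccontr)
  assume "H \<noteq> {h}"
  then obtain h' where h': "h' \<in> H" "h' \<noteq> h"
    using assms(2) by blast
  define m where "m = max h h'"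
  have "m \<in> H"
    using assms(2) h' by (simp add: m_def max_def)
  then have "{h, h', m + 1} \<subseteq> blocks H"
    using assms(2) h' by (auto simp: blocks_def)
  moreover have "h < m + 1" "h' < m + 1"
    by (simp_all add: m_def)
  then have "card {h, h', m + 1} = 3"
    using h' by simp
  ultimately show False
    using card_mono[OF finite_blocks[OF assms(1)], of "{h, h', m + 1}"] assms(3) by linarith
qed

lemma card_blocks_less_4:
  assumes "finite H" "H \<noteq> {}" "card (blocks H) < 4"
  shows "H \<subseteq> {Min H, Min H + 1}"
proof
  fix b assume b: "b \<in> H"
  define m where "m = Min H"
  have m: "m \<in> H" "m \<le> b"
    using assms(1,2) b by (simp_all add: m_def)
  show "b \<in> {Min H, Min H + 1}"
  proof (rule ccontr)
    assume "b \<notin> {Min H, Min H + 1}"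
    then have "m + 2 \<le> b"
      using m(2) unfolding m_def[symmetric] by simp
    then have "card {m, m + 1, b, b + 1} = 4"
      by simp
    moreover have "{m, m + 1, b, b + 1} \<subseteq> blocks H"
      using m(1) b by (auto simp: blocks_def)
    ultimately show False
      using card_mono[OF finite_blocks[OF assms(1)], of "{m, m + 1, b, b + 1}"] assms(3) by linarith
  qed
qed

lemma card_blocks_eq_4_consecutive:
  assumes "finite H" "card H \<le> 3" "x \<in> H" "x + 1 \<in> H" "card (blocks H) = 4"
  obtains a where "H = {a, a + 1, a + 2}"
proof -
  have "\<not> H \<subseteq> {x, x + 1}"
  proof
    assume "H \<subseteq> {x, x + 1}"
    then have "blocks H \<subseteq> {x, x + 1, x + 2}"
      by (auto simp: blocks_def)
    then have "card (blocks H) \<le> card {x, x + 1, x + 2}"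
      by (rule card_mono[rotated]) simp
    with assms(5) show False
      by simp
  qed
  then obtain w where w: "w \<in> H" "w \<noteq> x" "w \<noteq> x + 1"
    by blast
  have sub: "{x, x + 1, w} \<subseteq> H"
    using w assms(3,4) by simp
  moreover have "card {x, x + 1, w} = 3"
    using w by simp
  ultimately have H: "H = {x, x + 1, w}"
    using card_subset_eq[OF assms(1) sub] card_mono[OF assms(1) sub] assms(2) by simp
  have "w = x - 1 \<or> w = x + 2"
  proof (rule ccontr)
    assume "\<not> ?thesis"
    then have "card {x, x + 1, x + 2, w, w + 1} = 5"
      using w by simp
    moreover have "{x, x + 1, x + 2, w, w + 1} \<subseteq> blocks H"
      using w by (auto simp: blocks_def H)
    ultimately show False
      using card_mono[OF finite_blocks[OF assms(1)], of "{x, x + 1, x + 2, w, w + 1}"] assms(5) by linarith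
  qed
  then show thesis
  proof
    assume "w = x - 1"
    then have "H = {x - 1, x - 1 + 1, x - 1 + 2}"
      using H by auto
    then show thesis
      by (rule that)
  next
    assume "w = x + 2"
    then show thesis
      using that[of x] H by (simp add: insert_commute)
  qed
qed

lemma even_of_blocks_cover:
  fixes U :: "int set" and N :: int
  assumes "\<forall>x\<in>U. 2 \<le> x" "\<forall>x\<in>U. x + 1 \<notin> U" "{2..N} \<subseteq> blocks U" "x \<in> U" "x \<le> N"
  shows "even x"
proof -
  have "y \<le> N \<longrightarrow> (y \<in> U \<longleftrightarrow> even y)" if "2 \<le> y" for y
    using that
  proof (induction y rule: int_ge_induct)
    case base
    then show ?case
      using assms(1,3) by (force simp: blocks_def)
  next
    case (step y)
    show ?case
    proof
      assume "y + 1 \<le> N"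
      then have "y \<in> U \<longleftrightarrow> even y"
        using step by simp
      moreover have "y + 1 \<in> blocks U"
        using assms(3) step(1) \<open>y + 1 \<le> N\<close> by auto
      then have "y + 1 \<in> U \<or> y \<in> U"
        by (auto simp: blocks_def)
      ultimately show "y + 1 \<in> U \<longleftrightarrow> even (y + 1)"
        using assms(2) by auto
    qed
  qed
  then show ?thesis
    using assms(1,4,5) by blast
qed

text \<open>The shortened gaps \<open>min g (L - g)\<close> of three gaps \<open>g \<ge> 2\<close> summing to \<open>L\<close>: at most one
  gap exceeds \<open>L / 2\<close>, and then its complement is the sum of the other two.\<close>

definition short_gap_triple :: "int \<Rightarrow> int \<Rightarrow> int \<Rightarrow> int \<Rightarrow> bool" where
  "short_gap_triple L h1 h2 h3 \<longleftrightarrow> 2 \<le> h1 \<and> 2 \<le> h2 \<and> 2 \<le> h3 \<and>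
     (h1 + h2 + h3 = L \<or> h1 = h2 + h3 \<or> h2 = h1 + h3 \<or> h3 = h1 + h2)"

lemma short_gap_triple_min:
  fixes g1 g2 g3 L :: int
  assumes "2 \<le> g1" "2 \<le> g2" "2 \<le> g3" "g1 + g2 + g3 = L"
  shows "short_gap_triple L (min g1 (L - g1)) (min g2 (L - g2)) (min g3 (L - g3))"
  using assms unfolding short_gap_triple_def by linarith

lemma short_gap_triple_near_third:
  assumes "short_gap_triple L h1 h2 h3" "{h1, h2, h3} \<subseteq> {a, a + 1}"
  shows "\<exists>h\<in>{h1, h2, h3}. L \<le> 3 * h + 1 \<and> 3 * h \<le> L + 1"
proof -
  have h: "h1 \<in> {a, a + 1}" "h2 \<in> {a, a + 1}" "h3 \<in> {a, a + 1}"
    using assms(2) by auto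
  then have bounds: "a \<le> h1" "h1 \<le> a + 1" "a \<le> h2" "h2 \<le> a + 1" "a \<le> h3" "h3 \<le> a + 1"
    by auto
  have ge_2: "2 \<le> h1" "2 \<le> h2" "2 \<le> h3"
    using assms(1) by (simp_all add: short_gap_triple_def)
  from assms(1) consider "h1 + h2 + h3 = L" | "h1 = h2 + h3" | "h2 = h1 + h3" | "h3 = h1 + h2"
    unfolding short_gap_triple_def by blast
  then have sum: "h1 + h2 + h3 = L"
  proof cases
    case 1
    then show ?thesis .
  qed (rule ccontr, use ge_2 bounds in linarith)+
  from h have "h1 = h2 \<or> h1 = h3 \<or> h2 = h3"
    by auto
  then show ?thesis
  proof (elim disjE)
    assume "h1 = h2"
    then show ?thesis
      using sum bounds by (intro bexI[of _ h1] conjI) (linarith, linarith, simp)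
  next
    assume "h1 = h3"
    then show ?thesis
      using sum bounds by (intro bexI[of _ h1] conjI) (linarith, linarith, simp)
  next
    assume "h2 = h3"
    then show ?thesis
      using sum bounds by (intro bexI[of _ h2] conjI) (linarith, linarith, simp)
  qed
qed

lemma short_gap_triple_equal: "short_gap_triple L h h h \<Longrightarrow> 3 * h = L"
  by (auto simp: short_gap_triple_def)

lemma short_gap_triple_consecutive:
  assumes "short_gap_triple L h1 h2 h3" "{h1, h2, h3} = {a, a + 1, a + 2}"
  shows "3 * (a + 1) = L"
proof -
  have "card {h1, h2, h3} = 3"
    using assms(2) by simp
  then have "h1 \<noteq> h2" "h1 \<noteq> h3" "h2 \<noteq> h3"
    by (auto simp: card_insert_if split: if_splits)
  then have "h1 + h2 + h3 = \<Sum>{h1, h2, h3}"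
    by simp
  also have "\<dots> = 3 * a + 3"
    unfolding assms(2) by simp
  finally have sum: "h1 + h2 + h3 = 3 * a + 3" .
  have "h1 \<in> {a, a + 1, a + 2}" "h2 \<in> {a, a + 1, a + 2}" "h3 \<in> {a, a + 1, a + 2}"
    "a \<in> {h1, h2, h3}"
    using assms(2) by blast+
  then have "h1 \<le> a + 2" "h2 \<le> a + 2" "h3 \<le> a + 2" "a \<in> {h1, h2, h3}"
    by auto
  then have "2 \<le> a"
    using assms(1) unfolding short_gap_triple_def by auto
  from assms(1) consider "h1 + h2 + h3 = L" | "h1 = h2 + h3" | "h2 = h1 + h3" | "h3 = h1 + h2"
    unfolding short_gap_triple_def by blast
  then show ?thesis
  proof cases
    case 1
    then show ?thesis
      using sum by simp
  qed (use sum \<open>h1 \<le> a + 2\<close> \<open>h2 \<le> a + 2\<close> \<open>h3 \<le> a + 2\<close> \<open>2 \<le> a\<close> in linarith)+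
qed

lemma short_gap_triple_four_dvd:
  assumes "short_gap_triple L h1 h2 h3" "4 dvd L" "even h1" "even h2" "even h3"
  shows "4 dvd h1 \<or> 4 dvd h2 \<or> 4 dvd h3"
proof (rule ccontr)
  have two_mod_four: "\<exists>k. h = 4 * k + 2" if h: "even h" "\<not> 4 dvd h" for h :: int
  proof -
    obtain m where m: "h = 2 * m"
      using h(1) by (rule evenE)
    then have "odd m"
      using h(2) by auto
    then have "m = 2 * (m div 2) + 1"
      by simp
    then show ?thesis
      using m by (intro exI[of _ "m div 2"]) simp
  qed
  assume "\<not> ?thesis"
  then obtain k1 k2 k3 where k: "h1 = 4 * k1 + 2" "h2 = 4 * k2 + 2" "h3 = 4 * k3 + 2"
    using two_mod_four assms(3-5) by meson
  obtain m where m: "L = 4 * m"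
    using assms(2) by blast
  from assms(1) consider "h1 + h2 + h3 = L" | "h1 = h2 + h3" | "h2 = h1 + h3" | "h3 = h1 + h2"
    unfolding short_gap_triple_def by blast
  then show False
  proof cases
    case 1
    then have "4 * m = 4 * (k1 + k2 + k3 + 1) + 2"
      using k m by simp
    then show False
      using four_mult_neq by blast
  next
    case 2
    then have "4 * k1 = 4 * (k2 + k3) + 2"
      using k by simp
    then show False
      using four_mult_neq by blast
  next
    case 3
    then have "4 * k2 = 4 * (k1 + k3) + 2"
      using k by simp
    then show False
      using four_mult_neq by blast
  next
    case 4
    then have "4 * k3 = 4 * (k1 + k2) + 2"
      using k by simp
    then show False
      using four_mult_neq by blast
  qed
qed

section \<open>The upper bound\<close>

definition short_diffs :: "nat \<Rightarrow> int set \<Rightarrow> int set" where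
  "short_diffs L I = {a \<in> dstar L I. 2 * a \<le> int L}"

locale weight3_scac =
  fixes L :: nat and C :: "int set set"
  assumes scac: "is_SCAC L 3 C" and two_codewords: "2 \<le> card C"
begin

lemma finite_codewords: "finite C"
  using two_codewords by (simp add: card_ge_0_finite)

lemma other_codeword:
  assumes "I \<in> C"
  obtains J where "J \<in> C" "J \<noteq> I"
proof -
  have "\<not> C \<subseteq> {I}"
    using two_codewords card_mono[of "{I}" C] by auto
  then show thesis
    using that by blast
qed

lemma codeword_short_diffs:
  assumes "I \<in> C"
  obtains h1 h2 h3 where "short_diffs L I = {h1, h2, h3}" "short_gap_triple (int L) h1 h2 h3"
proof -
  have "I \<in> Pset L 3"
    using scac assms unfolding is_SCAC_def by blast
  then obtain x y z where I: "I = {x, y, z}" "0 \<le> x" "x < y" "y < z" "z < int L"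
    by (rule Pset_3_E)
  obtain J where J: "J \<in> C" "J \<noteq> I"
    using other_codeword[OF assms] .
  have "J \<in> Pset L 3"
    using scac J(1) unfolding is_SCAC_def by blast
  then have "J \<noteq> {}"
    by (auto simp: Pset_def)
  then have zero: "0 \<in> dset L J"
    by (simp add: dset_eq_insert_dstar)
  \<comment> \<open>\<open>0 \<in> dset L J\<close> must avoid the \<open>\<plusminus>1\<close> shifts of \<open>dstar L I\<close>, so no gap equals 1.\<close>
  have not_unit: "a \<noteq> 1 \<and> a \<noteq> int L - 1" if "a \<in> dstar L I" for a
    using scac_separated(2,3)[OF scac assms J(1) J(2)[symmetric] that] zero by auto
  define g1 g2 g3 where "g1 = y - x" and "g2 = z - y" and "g3 = int L - (z - x)"
  have dstar: "dstar L I = {g1, int L - g1} \<union> {g2, int L - g2} \<union> {g3, int L - g3}"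
    unfolding I(1) dstar_three[OF I(2-5)] g1_def g2_def g3_def by auto
  have "g1 \<noteq> 1" "g2 \<noteq> 1" "g3 \<noteq> 1"
    using not_unit[of g1] not_unit[of g2] not_unit[of g3] unfolding dstar by simp_all
  then have "2 \<le> g1" "2 \<le> g2" "2 \<le> g3" "g1 + g2 + g3 = int L"
    using I(2-5) unfolding g1_def g2_def g3_def by (arith, arith, arith, simp)
  moreover have "{a \<in> {g, int L - g}. 2 * a \<le> int L} = {min g (int L - g)}" for g
    by (auto simp: min_def)
  then have "short_diffs L I = {min g1 (int L - g1), min g2 (int L - g2), min g3 (int L - g3)}"
    unfolding short_diffs_def dstar Collect_disj_eq[symmetric] by auto
  ultimately show thesis
    using that short_gap_triple_min by blast
qed

lemma finite_short_diffs: "I \<in> C \<Longrightarrow> finite (short_diffs L I)"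
  by (metis codeword_short_diffs finite.emptyI finite_insert)

lemma card_short_diffs_le:
  assumes "I \<in> C"
  shows "card (short_diffs L I) \<le> 3"
proof -
  obtain h1 h2 h3 where "short_diffs L I = {h1, h2, h3}"
    using codeword_short_diffs[OF assms] .
  then show ?thesis
    by (simp add: card_insert_if)
qed

lemma short_diffs_nonempty: "I \<in> C \<Longrightarrow> short_diffs L I \<noteq> {}"
  by (metis codeword_short_diffs insert_not_empty)

lemma short_diffs_bounds:
  assumes "I \<in> C" "a \<in> short_diffs L I"
  shows "2 \<le> a" "2 * a \<le> int L"
proof -
  obtain h1 h2 h3 where "short_diffs L I = {h1, h2, h3}" "short_gap_triple (int L) h1 h2 h3"
    using codeword_short_diffs[OF assms(1)] .
  then show "2 \<le> a"
    using assms(2) by (auto simp: short_gap_triple_def)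
  show "2 * a \<le> int L"
    using assms(2) by (simp add: short_diffs_def)
qed

lemma short_diffs_le_half:
  assumes "I \<in> C" "a \<in> short_diffs L I"
  shows "a \<le> int (L div 2)"
proof -
  have "(2 * a) div 2 \<le> int L div 2"
    using zdiv_mono1[OF short_diffs_bounds(2)[OF assms], of 2] by simp
  then show ?thesis
    by (simp add: zdiv_int)
qed

lemma short_diffs_separated:
  assumes "I \<in> C" "J \<in> C" "I \<noteq> J" "a \<in> short_diffs L I" "b \<in> short_diffs L J"
  shows "2 \<le> \<bar>a - b\<bar>"
proof -
  have a: "a \<in> dstar L I" "2 \<le> a" "2 * a \<le> int L"
    using assms(4) short_diffs_bounds[OF assms(1,4)] by (simp_all add: short_diffs_def)
  have "b \<in> dset L J"
    using assms(5) by (simp add: short_diffs_def dstar_def)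
  moreover have "(a + 1) mod int L = a + 1" "(a - 1) mod int L = a - 1"
    using a(2,3) by simp_all
  ultimately have "b \<noteq> a" "b \<noteq> a + 1" "b \<noteq> a - 1"
    using scac_separated[OF scac assms(1-3) a(1)] by auto
  then show ?thesis
    by arith
qed

lemma blocks_short_diffs_disjoint:
  assumes "I \<in> C" "J \<in> C" "I \<noteq> J"
  shows "blocks (short_diffs L I) \<inter> blocks (short_diffs L J) = {}"
  using short_diffs_separated[OF assms] unfolding blocks_def by fastforce

lemma blocks_short_diffs_subset:
  assumes "I \<in> C"
  shows "blocks (short_diffs L I) \<subseteq> {2..int (L div 2) + 1}"
  using short_diffs_bounds(1)[OF assms] short_diffs_le_half[OF assms] unfolding blocks_def by fastforce

lemma sum_card_blocks:
  "(\<Sum>I\<in>C. card (blocks (short_diffs L I))) = card (\<Union>I\<in>C. blocks (short_diffs L I))"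
  using finite_codewords finite_short_diffs blocks_short_diffs_disjoint
  by (intro card_UN_disjoint[symmetric]) auto

lemma sum_card_blocks_le: "(\<Sum>I\<in>C. card (blocks (short_diffs L I))) \<le> L div 2"
proof -
  have "card (\<Union>I\<in>C. blocks (short_diffs L I)) \<le> card {2..int (L div 2) + 1}"
    using blocks_short_diffs_subset by (intro card_mono) auto
  then show ?thesis
    by (simp add: sum_card_blocks)
qed

lemma card_blocks_ge_2_codeword:
  assumes "I \<in> C"
  shows "2 \<le> card (blocks (short_diffs L I))"
proof -
  obtain h where "h \<in> short_diffs L I"
    using short_diffs_nonempty[OF assms] by blast
  then show ?thesis
    by (rule card_blocks_ge_2[OF finite_short_diffs[OF assms]])
qed

lemma card_blocks_less_3_codeword:
  assumes "I \<in> C" "card (blocks (short_diffs L I)) < 3"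
  obtains h where "short_diffs L I = {h}" "3 * h = int L"
proof -
  obtain h1 h2 h3 where H: "short_diffs L I = {h1, h2, h3}" "short_gap_triple (int L) h1 h2 h3"
    using codeword_short_diffs[OF assms(1)] .
  have "h1 \<in> short_diffs L I"
    using H(1) by simp
  from card_blocks_less_3[OF finite_short_diffs[OF assms(1)] this assms(2)]
  have "{h1, h2, h3} = {h1}"
    using H(1) by simp
  then have "h2 = h1" "h3 = h1"
    by auto
  then have "3 * h1 = int L"
    using H(2) short_gap_triple_equal by simp
  then show thesis
    using that H(1) \<open>h2 = h1\<close> \<open>h3 = h1\<close> by simp
qed

lemma card_blocks_less_4_codeword:
  assumes "I \<in> C" "card (blocks (short_diffs L I)) < 4"
  obtains h where "h \<in> short_diffs L I" "int L \<le> 3 * h + 1" "3 * h \<le> int L + 1"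
proof -
  obtain h1 h2 h3 where H: "short_diffs L I = {h1, h2, h3}" "short_gap_triple (int L) h1 h2 h3"
    using codeword_short_diffs[OF assms(1)] .
  have "{h1, h2, h3} \<subseteq> {Min (short_diffs L I), Min (short_diffs L I) + 1}"
    using card_blocks_less_4[OF finite_short_diffs[OF assms(1)] short_diffs_nonempty[OF assms(1)] assms(2)]
    unfolding H(1) .
  from short_gap_triple_near_third[OF H(2) this] show thesis
    using that unfolding H(1) by blast
qed

lemma card_blocks_eq_4_codeword:
  assumes "I \<in> C" "card (blocks (short_diffs L I)) = 4"
    "x \<in> short_diffs L I" "x + 1 \<in> short_diffs L I"
  obtains h where "h \<in> short_diffs L I" "3 * h = int L"
proof -
  obtain h1 h2 h3 where H: "short_diffs L I = {h1, h2, h3}" "short_gap_triple (int L) h1 h2 h3"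
    using codeword_short_diffs[OF assms(1)] .
  obtain a where "short_diffs L I = {a, a + 1, a + 2}"
    by (rule card_blocks_eq_4_consecutive[OF finite_short_diffs card_short_diffs_le assms(3,4,2)])
      (use assms(1) in simp_all)
  then show thesis
    using that[of "a + 1"] short_gap_triple_consecutive[OF H(2)] H(1) by simp
qed

lemma exceptional_codeword_unique:
  assumes "I \<in> C" "J \<in> C"
    "card (blocks (short_diffs L I)) < 4" "card (blocks (short_diffs L J)) < 4"
  shows "I = J"
proof (rule ccontr)
  assume "I \<noteq> J"
  obtain a where "a \<in> short_diffs L I" "int L \<le> 3 * a + 1" "3 * a \<le> int L + 1"
    using card_blocks_less_4_codeword[OF assms(1,3)] .
  moreover obtain b where "b \<in> short_diffs L J" "int L \<le> 3 * b + 1" "3 * b \<le> int L + 1"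
    using card_blocks_less_4_codeword[OF assms(2,4)] .
  moreover have "2 \<le> \<bar>a - b\<bar>"
    by (rule short_diffs_separated[OF assms(1,2) \<open>I \<noteq> J\<close>]) fact+
  ultimately show False
    by arith
qed

lemma regular_codeword:
  assumes "I0 \<in> C" "card (blocks (short_diffs L I0)) < 4" "J \<in> C - {I0}"
  shows "4 \<le> card (blocks (short_diffs L J))"
  using exceptional_codeword_unique[OF _ assms(1) _ assms(2), of J] assms(3) by force

lemma sum_card_blocks_exceptional:
  assumes "I0 \<in> C" "card (blocks (short_diffs L I0)) < 4"
  shows "card (blocks (short_diffs L I0)) + 4 * (card C - 1) \<le> (\<Sum>I\<in>C. card (blocks (short_diffs L I)))"
proof -
  have "\<forall>J\<in>C - {I0}. 4 \<le> card (blocks (short_diffs L J))"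
    using regular_codeword[OF assms] by blast
  then have "(\<Sum>J\<in>C - {I0}. 4) \<le> (\<Sum>J\<in>C - {I0}. card (blocks (short_diffs L J)))"
    by (intro sum_mono) simp
  then have "4 * card (C - {I0}) \<le> (\<Sum>J\<in>C - {I0}. card (blocks (short_diffs L J)))"
    by (simp add: mult.commute)
  then show ?thesis
    using finite_codewords assms(1) by (simp add: sum.remove)
qed

lemma four_card_le_regular:
  assumes "\<forall>I\<in>C. 4 \<le> card (blocks (short_diffs L I))"
  shows "4 * card C \<le> (\<Sum>I\<in>C. card (blocks (short_diffs L I)))"
proof -
  have "(\<Sum>I\<in>C. 4) \<le> (\<Sum>I\<in>C. card (blocks (short_diffs L I)))"
    using assms by (intro sum_mono) simp
  then show ?thesis
    by (simp add: mult.commute)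
qed

lemma four_card_le_sum: "4 * card C \<le> (\<Sum>I\<in>C. card (blocks (short_diffs L I))) + 2"
proof (cases "\<forall>I\<in>C. 4 \<le> card (blocks (short_diffs L I))")
  case True
  then show ?thesis
    using four_card_le_regular by simp
next
  case False
  then obtain I0 where I0: "I0 \<in> C" "card (blocks (short_diffs L I0)) < 4"
    by auto
  show ?thesis
    using sum_card_blocks_exceptional[OF I0] card_blocks_ge_2_codeword[OF I0(1)] two_codewords
    by linarith
qed

lemma four_card_le: "4 * card C \<le> L div 2 + 2"
  using four_card_le_sum sum_card_blocks_le by linarith

lemma tight_codewords:
  assumes "L div 2 + 2 \<le> 4 * card C"
  obtains I0 where "I0 \<in> C" "card (blocks (short_diffs L I0)) = 2"
    "\<forall>J\<in>C - {I0}. card (blocks (short_diffs L J)) = 4"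
    "(\<Union>I\<in>C. blocks (short_diffs L I)) = {2..int (L div 2) + 1}"
proof -
  let ?b = "\<lambda>I. card (blocks (short_diffs L I))"
  have sum: "(\<Sum>I\<in>C. ?b I) = L div 2"
    using four_card_le_sum sum_card_blocks_le assms by linarith
  obtain I0 where I0: "I0 \<in> C" "?b I0 < 4"
    using four_card_le_regular sum assms by fastforce
  have "?b I0 + 4 * (card C - 1) \<le> L div 2"
    using sum_card_blocks_exceptional[OF I0] sum by simp
  then have b2: "?b I0 = 2"
    using card_blocks_ge_2_codeword[OF I0(1)] assms two_codewords by linarith
  have "(\<Sum>J\<in>C - {I0}. 4) = L div 2 - 2"
    using sum_card_blocks_exceptional[OF I0] sum b2 assms finite_codewords I0(1) two_codewords
    by (simp add: card_Diff_singleton)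
  also have "\<dots> = (\<Sum>J\<in>C - {I0}. ?b J)"
    using sum b2 finite_codewords I0(1) by (simp add: sum.remove)
  finally have "4 = ?b J" if "J \<in> C - {I0}" for J
    by (rule sum_mono_inv[OF _ regular_codeword[OF I0] that finite_Diff[OF finite_codewords]])
  moreover have sub: "(\<Union>I\<in>C. blocks (short_diffs L I)) \<subseteq> {2..int (L div 2) + 1}"
    using blocks_short_diffs_subset by blast
  have "card (\<Union>I\<in>C. blocks (short_diffs L I)) = card {2..int (L div 2) + 1}"
    using sum sum_card_blocks by simp
  then have "(\<Union>I\<in>C. blocks (short_diffs L I)) = {2..int (L div 2) + 1}"
    by (rule card_subset_eq[OF finite_atLeastAtMost_int sub])
  ultimately show thesis
    using that[OF I0(1) b2] by simp
qed

lemma tight_short_diffs_not_consecutive: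
  assumes "L div 2 + 2 \<le> 4 * card C" "I \<in> C" "J \<in> C" "x \<in> short_diffs L I" "x + 1 \<in> short_diffs L J"
  shows False
proof -
  obtain I0 where I0: "I0 \<in> C" "card (blocks (short_diffs L I0)) = 2"
    and regular: "\<forall>J\<in>C - {I0}. card (blocks (short_diffs L J)) = 4"
    and "(\<Union>I\<in>C. blocks (short_diffs L I)) = {2..int (L div 2) + 1}"
    using tight_codewords[OF assms(1)] .
  obtain h0 where h0: "short_diffs L I0 = {h0}" "3 * h0 = int L"
    using card_blocks_less_3_codeword[OF I0(1)] I0(2) by auto
  show False
  proof (cases "I = J")
    case False
    then show False
      using short_diffs_separated[OF assms(2,3) False assms(4,5)] by simp
  next
    case True
    show False
    proof (cases "I = I0")
      case True
      then show False
        using assms(4,5) \<open>I = J\<close> h0(1) by simp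
    next
      case False
      then obtain h where "h \<in> short_diffs L I" "3 * h = int L"
        using card_blocks_eq_4_codeword[OF assms(2) _ assms(4)] regular assms(2,5) \<open>I = J\<close> by auto
      then show False
        using short_diffs_separated[OF assms(2) I0(1) False, of h h0] h0 by simp
    qed
  qed
qed

lemma tight_short_diffs_even:
  assumes "L div 2 + 2 \<le> 4 * card C" "I \<in> C" "a \<in> short_diffs L I"
  shows "even a"
proof -
  obtain I0 where "I0 \<in> C" "card (blocks (short_diffs L I0)) = 2"
    "\<forall>J\<in>C - {I0}. card (blocks (short_diffs L J)) = 4"
    and cover: "(\<Union>I\<in>C. blocks (short_diffs L I)) = {2..int (L div 2) + 1}"
    using tight_codewords[OF assms(1)] .
  define U where "U = (\<Union>I\<in>C. short_diffs L I)"
  have "blocks U = (\<Union>I\<in>C. blocks (short_diffs L I))"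
    unfolding U_def blocks_def by auto
  then have cover_U: "{2..int (L div 2)} \<subseteq> blocks U"
    using cover by auto
  have ge_2: "\<forall>x\<in>U. 2 \<le> x"
    unfolding U_def using short_diffs_bounds by blast
  have no_consecutive: "\<forall>x\<in>U. x + 1 \<notin> U"
    unfolding U_def using tight_short_diffs_not_consecutive[OF assms(1)] by blast
  have "a \<in> U" "a \<le> int (L div 2)"
    using assms(2,3) short_diffs_le_half[OF assms(2,3)] unfolding U_def by auto
  then show ?thesis
    by (rule even_of_blocks_cover[OF ge_2 no_consecutive cover_U])
qed

lemma card_le_of_hitting:
  assumes "finite A" "\<forall>I\<in>C. short_diffs L I \<inter> A \<noteq> {}"
  shows "card C \<le> card A"
proof -
  define e where "e I = (SOME a. a \<in> short_diffs L I \<inter> A)" for I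
  have e: "e I \<in> short_diffs L I \<inter> A" if "I \<in> C" for I
    unfolding e_def by (rule someI_ex) (use assms(2) that in blast)
  have "inj_on e C"
  proof (rule inj_onI, rule ccontr)
    fix I J assume "I \<in> C" "J \<in> C" "e I = e J" "I \<noteq> J"
    then show False
      using short_diffs_separated[OF \<open>I \<in> C\<close> \<open>J \<in> C\<close> \<open>I \<noteq> J\<close>, of "e I" "e J"]
        e[OF \<open>I \<in> C\<close>] e[OF \<open>J \<in> C\<close>] by simp
  qed
  moreover have "e ` C \<subseteq> A"
    using e by blast
  ultimately show ?thesis
    using card_inj_on_le assms(1) by blast
qed

lemma tight_hits_multiple_of_four:
  assumes "L div 2 + 2 \<le> 4 * card C" "4 dvd L" "I \<in> C"
  shows "short_diffs L I \<inter> {a. 2 \<le> a \<and> a \<le> int (L div 2) \<and> 4 dvd a} \<noteq> {}"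
proof -
  obtain h1 h2 h3 where H: "short_diffs L I = {h1, h2, h3}" "short_gap_triple (int L) h1 h2 h3"
    using codeword_short_diffs[OF assms(3)] .
  have "even h1" "even h2" "even h3"
    using tight_short_diffs_even[OF assms(1,3)] H(1) by simp_all
  moreover have "(4::int) dvd int L"
    using assms(2) by (metis int_dvd_int_iff of_nat_numeral)
  ultimately have "4 dvd h1 \<or> 4 dvd h2 \<or> 4 dvd h3"
    using short_gap_triple_four_dvd[OF H(2)] by blast
  then obtain h where "h \<in> short_diffs L I" "4 dvd h"
    using H(1) by auto
  moreover from this have "2 \<le> h" "h \<le> int (L div 2)"
    using short_diffs_bounds[OF assms(3)] short_diffs_le_half[OF assms(3)] by auto
  ultimately show ?thesis
    by blast
qed

text \<open>Near the bound all short differences are even; when \<open>4 dvd L\<close> each codeword then has one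
  divisible by 4, and these are distinct multiples of 4 in \<open>[2, L div 2]\<close>, too few of them.\<close>

lemma four_card_less_of_four_dvd:
  assumes "4 dvd L"
  shows "4 * card C < L div 2 + 2"
proof (rule ccontr)
  assume "\<not> ?thesis"
  then have "L div 2 + 2 \<le> 4 * card C"
    by simp
  then have "card C \<le> card {a. 2 \<le> a \<and> a \<le> int (L div 2) \<and> 4 dvd a}"
    using tight_hits_multiple_of_four assms card_multiples_of_four(1)[OF of_nat_0_le_iff]
    by (intro card_le_of_hitting) auto
  then have "4 * int (card C) \<le> int (L div 2)"
    using card_multiples_of_four(2)[OF of_nat_0_le_iff[of "L div 2"]] by linarith
  with \<open>L div 2 + 2 \<le> 4 * card C\<close> show False
    by linarith
qed

end

theorem four_card_le_half:
  assumes "is_SCAC L 3 C" "4 \<le> L"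
  shows "4 * card C \<le> L div 2 + 2"
proof (cases "2 \<le> card C")
  case True
  then show ?thesis
    using weight3_scac.four_card_le[of L C] assms(1) by (simp add: weight3_scac_def)
next
  case False
  then show ?thesis
    using assms(2) by linarith
qed

theorem four_card_le_half_mod_8:
  assumes "is_SCAC L 3 C" "L mod 8 = 4" "12 \<le> L"
  shows "4 * card C \<le> L div 2 - 2"
proof (cases "2 \<le> card C")
  case True
  have "4 dvd L"
    using assms(2) by presburger
  then have "4 * card C < L div 2 + 2"
    using weight3_scac.four_card_less_of_four_dvd[of L C] assms(1) True by (simp add: weight3_scac_def)
  moreover have "L div 2 mod 4 = 2"
    using assms(2) by presburger
  ultimately show ?thesis
    by presburger
next
  case False
  then show ?thesis
    using assms(3) by linarith
qed

section \<open>Codewords in arithmetic progression\<close>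

text \<open>For even \<open>L\<close> the \<open>\<plusminus>1\<close> shifts of even differences are odd, so they cannot meet an even
  difference set.\<close>

lemma scac_of_even_disjoint:
  assumes "even L" "C \<subseteq> Pset L w"
    and even_diffs: "\<forall>I\<in>C. \<forall>a\<in>dset L I. even a"
    and disjoint: "\<forall>I\<in>C. \<forall>J\<in>C. I \<noteq> J \<longrightarrow> dstar L I \<inter> dstar L J = {}"
  shows "is_SCAC L w C"
  unfolding is_SCAC_def
proof (intro conjI assms(2) ballI impI)
  fix I J assume IJ: "I \<in> C" "J \<in> C" "I \<noteq> J"
  have odd_shift: "odd ((a + c) mod int L)" if "a \<in> dstar L I" "odd c" for a c
  proof -
    have "even a"
      using even_diffs IJ(1) that(1) by (auto simp: dstar_def)
    moreover have "even (int L)"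
      using assms(1) by simp
    ultimately show ?thesis
      using that(2) by (simp add: dvd_mod_iff)
  qed
  show "(dstar L I \<union> shiftL L 1 (dstar L I) \<union> shiftL L (- 1) (dstar L I)) \<inter> dset L J = {}"
  proof (rule equals0I)
    fix x assume x: "x \<in> (dstar L I \<union> shiftL L 1 (dstar L I) \<union> shiftL L (- 1) (dstar L I)) \<inter> dset L J"
    then have "even x"
      using even_diffs IJ(2) by blast
    moreover have "x \<in> dstar L I \<Longrightarrow> x \<in> dstar L J"
      using x by (auto simp: dstar_def)
    ultimately show False
      using x disjoint IJ odd_shift[of _ 1] odd_shift[of _ "-1"] by (auto simp: shiftL_def)
  qed
qed

definition ap_codeword :: "int \<Rightarrow> int set" where
  "ap_codeword u = {0, 2 * u, 4 * u}"

lemma ap_codeword_in_Pset: "0 < u \<Longrightarrow> 4 * u < int L \<Longrightarrow> ap_codeword u \<in> Pset L 3"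
  by (auto simp: ap_codeword_def Pset_def)

lemma dstar_ap_codeword:
  assumes "0 < u" "4 * u < int L"
  shows "dstar L (ap_codeword u) = {2 * u, 4 * u, int L - 2 * u, int L - 4 * u}"
  using dstar_three[of 0 "2 * u" "4 * u" L] assms by (auto simp: ap_codeword_def)

lemma dset_ap_codeword_even:
  assumes "even L" "0 < u" "4 * u < int L" "a \<in> dset L (ap_codeword u)"
  shows "even a"
  using assms dstar_ap_codeword[OF assms(2,3)]
  by (auto simp: dset_eq_insert_dstar ap_codeword_def)

lemma ap_codeword_inj: "inj_on ap_codeword {u. 0 < u}"
proof (rule inj_onI)
  fix u v assume "u \<in> {u. 0 < u}" "v \<in> {u. 0 < u}" "ap_codeword u = ap_codeword v"
  then have "Max (ap_codeword u) = Max (ap_codeword v)" "0 < u" "0 < v"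
    by simp_all
  then show "u = v"
    by (simp add: ap_codeword_def max_def)
qed

lemma dstar_ap_codeword_disjoint:
  assumes "0 < u" "4 * u < int L" "0 < v" "4 * v < int L"
    and "\<forall>a\<in>{2 * u, 4 * u}. \<forall>b\<in>{2 * v, 4 * v}. a \<noteq> b \<and> a + b \<noteq> int L"
  shows "dstar L (ap_codeword u) \<inter> dstar L (ap_codeword v) = {}"
  using assms(5) unfolding dstar_ap_codeword[OF assms(1,2)] dstar_ap_codeword[OF assms(3,4)]
  by auto

theorem scac_ap_codewords:
  assumes "even L" and W: "\<forall>u\<in>W. 0 < u \<and> 4 * u < int L"
    and apart: "\<forall>u\<in>W. \<forall>v\<in>W. u \<noteq> v \<longrightarrow>
      (\<forall>a\<in>{2 * u, 4 * u}. \<forall>b\<in>{2 * v, 4 * v}. a \<noteq> b \<and> a + b \<noteq> int L)"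
  shows "is_SCAC L 3 (ap_codeword ` W)" "card (ap_codeword ` W) = card W"
proof -
  have inj: "inj_on ap_codeword W"
    using W by (blast intro: inj_on_subset[OF ap_codeword_inj])
  then show "card (ap_codeword ` W) = card W"
    by (rule card_image)
  show "is_SCAC L 3 (ap_codeword ` W)"
  proof (rule scac_of_even_disjoint[OF assms(1)])
    show "ap_codeword ` W \<subseteq> Pset L 3"
      using W ap_codeword_in_Pset by blast
    show "\<forall>I\<in>ap_codeword ` W. \<forall>a\<in>dset L I. even a"
      using W dset_ap_codeword_even[OF assms(1)] by blast
    show "\<forall>I\<in>ap_codeword ` W. \<forall>J\<in>ap_codeword ` W. I \<noteq> J \<longrightarrow> dstar L I \<inter> dstar L J = {}"
    proof (intro ballI impI)
      fix I J assume "I \<in> ap_codeword ` W" "J \<in> ap_codeword ` W" "I \<noteq> J"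
      then obtain u v where uv: "u \<in> W" "v \<in> W" "u \<noteq> v" and "I = ap_codeword u" "J = ap_codeword v"
        by blast
      moreover have "dstar L (ap_codeword u) \<inter> dstar L (ap_codeword v) = {}"
      proof (rule dstar_ap_codeword_disjoint)
        show "0 < u" "4 * u < int L" "0 < v" "4 * v < int L"
          using W uv by simp_all
        show "\<forall>a\<in>{2 * u, 4 * u}. \<forall>b\<in>{2 * v, 4 * v}. a \<noteq> b \<and> a + b \<noteq> int L"
          using apart uv by blast
      qed
      ultimately show "dstar L I \<inter> dstar L J = {}"
        by simp
    qed
  qed
qed

theorem scac_mod_8_construction:
  assumes "L mod 8 = 4"
  obtains C where "is_SCAC L 3 C" "card C = (L - 4) div 8"
proof -
  define K where "K = int ((L - 4) div 8)"
  have L: "int L = 8 * K + 4"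
    using assms unfolding K_def by presburger
  define W where "W = (\<lambda>k. 2 * k + 1) ` {0..<K}"
  have "inj_on (\<lambda>k::int. 2 * k + 1) {0..<K}"
    by (rule inj_onI) simp
  then have "card W = (L - 4) div 8"
    unfolding W_def K_def by (simp add: card_image)
  moreover have W: "\<forall>u\<in>W. 0 < u \<and> 4 * u < int L"
    unfolding W_def L by auto
  moreover have "\<forall>u\<in>W. \<forall>v\<in>W. u \<noteq> v \<longrightarrow>
      (\<forall>a\<in>{2 * u, 4 * u}. \<forall>b\<in>{2 * v, 4 * v}. a \<noteq> b \<and> a + b \<noteq> int L)"
  proof (intro ballI impI)
    fix u v a b assume uv: "u \<in> W" "v \<in> W" "u \<noteq> v"
      and ab: "a \<in> {2 * u, 4 * u}" "b \<in> {2 * v, 4 * v}"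
    have parity: "odd u" "odd v" and bounds: "u < 2 * K" "v < 2 * K"
      using uv unfolding W_def by auto
    have "2 * u \<noteq> 4 * v" "4 * u \<noteq> 2 * v"
      "2 * u + 4 * v \<noteq> 8 * K + 4" "4 * u + 2 * v \<noteq> 8 * K + 4" "4 * u + 4 * v \<noteq> 8 * K + 4"
      using parity by presburger+
    moreover have "2 * u + 2 * v \<noteq> 8 * K + 4"
      using bounds by linarith
    ultimately show "a \<noteq> b \<and> a + b \<noteq> int L"
      using ab uv(3) unfolding L by auto
  qed
  moreover have "even L"
    using assms by presburger
  ultimately show thesis
    using that scac_ap_codewords[of L W] by simp
qed

definition pm_doubling_free :: "int \<Rightarrow> int set \<Rightarrow> bool" where
  "pm_doubling_free N W \<longleftrightarrow> (\<forall>u\<in>W. 0 < u \<and> 2 * u < N) \<and>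
     (\<forall>u\<in>W. \<forall>v\<in>W. u \<noteq> v \<longrightarrow> u \<noteq> 2 * v \<and> u + 2 * v \<noteq> N)"

theorem scac_pm_doubling_free_construction:
  assumes L: "int L = 2 * N" and "odd N" and free: "pm_doubling_free N W"
  shows "is_SCAC L 3 (ap_codeword ` W)" "card (ap_codeword ` W) = card W"
proof -
  have "even L"
    using L by presburger
  moreover have W: "\<forall>u\<in>W. 0 < u \<and> 4 * u < int L"
    using free L by (auto simp: pm_doubling_free_def)
  moreover have "\<forall>u\<in>W. \<forall>v\<in>W. u \<noteq> v \<longrightarrow>
      (\<forall>a\<in>{2 * u, 4 * u}. \<forall>b\<in>{2 * v, 4 * v}. a \<noteq> b \<and> a + b \<noteq> int L)"
  proof (intro ballI impI)
    fix u v a b assume uv: "u \<in> W" "v \<in> W" "u \<noteq> v"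
      and ab: "a \<in> {2 * u, 4 * u}" "b \<in> {2 * v, 4 * v}"
    have pairs: "\<forall>u\<in>W. \<forall>v\<in>W. u \<noteq> v \<longrightarrow> u \<noteq> 2 * v \<and> u + 2 * v \<noteq> N"
      and "\<forall>u\<in>W. 2 * u < N"
      using free by (simp_all add: pm_doubling_free_def)
    then have "u \<noteq> 2 * v" "u + 2 * v \<noteq> N" "v \<noteq> 2 * u" "v + 2 * u \<noteq> N" "2 * u < N" "2 * v < N"
      using uv by auto
    moreover have "4 * u + 4 * v \<noteq> 2 * N"
      using \<open>odd N\<close> by presburger
    ultimately show "a \<noteq> b \<and> a + b \<noteq> int L"
      using ab uv(3) unfolding L by auto
  qed
  ultimately show "is_SCAC L 3 (ap_codeword ` W)" "card (ap_codeword ` W) = card W"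
    using scac_ap_codewords[of L W] by simp_all
qed

section \<open>Colouring the orbits of doubling and negation\<close>

definition pm_pow2_cong :: "int \<Rightarrow> nat \<Rightarrow> int \<Rightarrow> int \<Rightarrow> bool" where
  "pm_pow2_cong n j y x \<longleftrightarrow> (\<exists>s\<in>{1, -1}. [x = s * (2 ^ j * y)] (mod n))"

lemma pm_pow2_cong_mod_iff: "pm_pow2_cong n j y (x mod n) \<longleftrightarrow> pm_pow2_cong n j y x"
  by (simp add: pm_pow2_cong_def)

lemma pm_pow2_cong_uminus_iff: "pm_pow2_cong n j y (- x) \<longleftrightarrow> pm_pow2_cong n j y x"
proof -
  have "[- x = a] (mod n) \<longleftrightarrow> [x = - a] (mod n)" for a
    using cong_minus_minus_iff[of x "- a" n] by simp
  then show ?thesis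
    unfolding pm_pow2_cong_def by auto
qed

lemma pm_pow2_cong_double:
  assumes "pm_pow2_cong n j y x"
  shows "pm_pow2_cong n (Suc j) y (2 * x)"
proof -
  obtain s where "s \<in> {1, -1}" "[x = s * (2 ^ j * y)] (mod n)"
    using assms unfolding pm_pow2_cong_def by blast
  moreover from this have "[2 * x = s * (2 ^ Suc j * y)] (mod n)"
    using cong_scalar_left[of x "s * (2 ^ j * y)" n 2] by (simp add: ac_simps)
  ultimately show ?thesis
    unfolding pm_pow2_cong_def by blast
qed

lemma pm_pow2_cong_halve:
  assumes "[2 ^ K = 1] (mod n)" "1 \<le> K" "pm_pow2_cong n j y (2 * x)"
  shows "pm_pow2_cong n (K - 1 + j) y x"
proof -
  obtain s where "s \<in> {1, -1}" "[2 * x = s * (2 ^ j * y)] (mod n)"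
    using assms(3) unfolding pm_pow2_cong_def by blast
  have "[x = 2 ^ K * x] (mod n)"
    using cong_scalar_right[OF assms(1), of x] by (simp add: cong_sym_eq)
  also have "2 ^ K * x = 2 ^ (K - 1) * (2 * x)"
    using assms(2) by (simp add: power_eq_if)
  also have "[\<dots> = 2 ^ (K - 1) * (s * (2 ^ j * y))] (mod n)"
    by (rule cong_scalar_left) fact
  also have "2 ^ (K - 1) * (s * (2 ^ j * y)) = s * (2 ^ (K - 1 + j) * y)"
    by (simp add: power_add ac_simps)
  finally show ?thesis
    using \<open>s \<in> {1, -1}\<close> unfolding pm_pow2_cong_def by blast
qed

lemma pm_pow2_cong_diff:
  assumes "pm_pow2_cong n i y x" "pm_pow2_cong n (i + d) y x"
  shows "pm_pow2_cong n d x x"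
proof -
  obtain s t where st: "s \<in> {1, -1}" "t \<in> {1, -1}"
    and x: "[x = s * (2 ^ i * y)] (mod n)" "[x = t * (2 ^ (i + d) * y)] (mod n)"
    using assms unfolding pm_pow2_cong_def by blast
  have "[(s * t) * (2 ^ d * x) = (s * t) * (2 ^ d * (s * (2 ^ i * y)))] (mod n)"
    using x(1) by (intro cong_scalar_left)
  also have "(s * t) * (2 ^ d * (s * (2 ^ i * y))) = t * (2 ^ (i + d) * y)"
    using st(1) by (auto simp: power_add ac_simps)
  also have "[\<dots> = x] (mod n)"
    using x(2) by (simp add: cong_sym_eq)
  finally have "[x = (s * t) * (2 ^ d * x)] (mod n)"
    by (simp add: cong_sym_eq)
  moreover have "s * t \<in> {1, -1}"
    using st by auto
  ultimately show ?thesis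
    unfolding pm_pow2_cong_def by blast
qed

lemma pm_pow2_cong_parity:
  assumes consistent: "\<forall>j. pm_pow2_cong n j x x \<longrightarrow> even j"
    and "pm_pow2_cong n i y x" "pm_pow2_cong n j y x"
  shows "even i \<longleftrightarrow> even j"
proof -
  have "even i \<longleftrightarrow> even j" if "i \<le> j" "pm_pow2_cong n i y x" "pm_pow2_cong n j y x" for i j
  proof -
    have "pm_pow2_cong n (j - i) x x"
      using pm_pow2_cong_diff[of n i y x "j - i"] that by simp
    then have "even (j - i)"
      using consistent by blast
    moreover have "j = i + (j - i)"
      using that(1) by simp
    ultimately show ?thesis
      by (metis even_add)
  qed
  then show ?thesis
    using assms(2,3) by (metis nle_le)
qed

theorem parity_colouring:
  fixes n :: int and X :: "int set"
  assumes K: "[2 ^ K = 1] (mod n)" "1 \<le> K"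
    and X_double: "\<forall>x\<in>X. (2 * x) mod n \<in> X" and X_uminus: "\<forall>x\<in>X. (- x) mod n \<in> X"
    and consistent: "\<forall>x\<in>X. \<forall>j. pm_pow2_cong n j x x \<longrightarrow> even j"
  obtains f where "\<forall>x\<in>X. f ((2 * x) mod n) = (\<not> f x)" "\<forall>x\<in>X. f ((- x) mod n) = f x"
proof -
  have orbit_double: "(\<exists>j. pm_pow2_cong n j y ((2 * x) mod n)) \<longleftrightarrow> (\<exists>j. pm_pow2_cong n j y x)" for y x
    unfolding pm_pow2_cong_mod_iff using pm_pow2_cong_double pm_pow2_cong_halve[OF K] by blast
  have orbit_uminus: "(\<exists>j. pm_pow2_cong n j y ((- x) mod n)) \<longleftrightarrow> (\<exists>j. pm_pow2_cong n j y x)" for y x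
    by (simp add: pm_pow2_cong_mod_iff pm_pow2_cong_uminus_iff)
  define rep where "rep x = (SOME y. \<exists>j. pm_pow2_cong n j y x)" for x
  have rep_double: "rep ((2 * x) mod n) = rep x" and rep_uminus: "rep ((- x) mod n) = rep x" for x
    unfolding rep_def orbit_double orbit_uminus by simp_all
  have self: "pm_pow2_cong n 0 x x" for x
    by (auto simp: pm_pow2_cong_def)
  have rep: "\<exists>j. pm_pow2_cong n j (rep x) x" for x
    unfolding rep_def by (rule someI_ex[of "\<lambda>y. \<exists>j. pm_pow2_cong n j y x"]) (use self in blast)
  define exponent where "exponent x = (SOME j. pm_pow2_cong n j (rep x) x)" for x
  have exponent: "pm_pow2_cong n (exponent x) (rep x) x" for x
    unfolding exponent_def using rep by (rule someI_ex)
  \<comment> \<open>\<open>f x\<close> is the parity of \<open>j\<close> in \<open>x \<equiv> \<plusminus>2 ^ j * rep x\<close>; consistency makes it well defined.\<close>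
  define f where "f x = even (exponent x)" for x
  have f: "f x \<longleftrightarrow> even j" if "x \<in> X" "pm_pow2_cong n j (rep x) x" for x j
    unfolding f_def using pm_pow2_cong_parity consistent that exponent by blast
  show thesis
  proof (rule that; intro ballI)
    fix x assume x: "x \<in> X"
    have "pm_pow2_cong n (Suc (exponent x)) (rep ((2 * x) mod n)) ((2 * x) mod n)"
      unfolding rep_double pm_pow2_cong_mod_iff by (rule pm_pow2_cong_double[OF exponent])
    then show "f ((2 * x) mod n) = (\<not> f x)"
      using f[OF X_double[rule_format, OF x]] f_def by simp
    have "pm_pow2_cong n (exponent x) (rep ((- x) mod n)) ((- x) mod n)"
      unfolding rep_uminus pm_pow2_cong_mod_iff pm_pow2_cong_uminus_iff by (rule exponent)
    then show "f ((- x) mod n) = f x"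
      using f[OF X_uminus[rule_format, OF x]] f_def by simp
  qed
qed

lemma pm_doubling_free_colour_class:
  fixes N :: int
  assumes "X \<subseteq> {1..N - 1}" and X_double: "\<forall>x\<in>X. (2 * x) mod N \<in> X"
    and f_double: "\<forall>x\<in>X. f ((2 * x) mod N) = (\<not> f x)" and f_uminus: "\<forall>x\<in>X. f ((- x) mod N) = f x"
  shows "pm_doubling_free N {u \<in> X. 2 * u < N \<and> f u}"
  unfolding pm_doubling_free_def
proof (intro conjI)
  show "\<forall>u\<in>{u \<in> X. 2 * u < N \<and> f u}. 0 < u \<and> 2 * u < N"
    using assms(1) by auto
  show "\<forall>u\<in>{u \<in> X. 2 * u < N \<and> f u}. \<forall>v\<in>{u \<in> X. 2 * u < N \<and> f u}. u \<noteq> v \<longrightarrow>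
    u \<noteq> 2 * v \<and> u + 2 * v \<noteq> N"
  proof (intro ballI impI conjI)
    fix u v assume u: "u \<in> {u \<in> X. 2 * u < N \<and> f u}" and v: "v \<in> {u \<in> X. 2 * u < N \<and> f u}"
    have v_pos: "0 < v"
      using v assms(1) by auto
    then have double: "(2 * v) mod N = 2 * v"
      using v by simp
    then have "2 * v \<in> X" "\<not> f (2 * v)"
      using X_double f_double v by (metis (mono_tags, lifting) mem_Collect_eq)+
    then show "u \<noteq> 2 * v"
      using u by auto
    have "(- (2 * v)) mod N = N - 2 * v"
      using v v_pos by (intro uminus_mod_eq) auto
    then have "\<not> f (N - 2 * v)"
      using f_uminus \<open>2 * v \<in> X\<close> \<open>\<not> f (2 * v)\<close> by metis
    then show "u + 2 * v \<noteq> N"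
      using u by auto
  qed
qed

lemma inj_on_double_mod:
  fixes N :: int
  assumes "odd N" "X \<subseteq> {1..N - 1}"
  shows "inj_on (\<lambda>x. (2 * x) mod N) X"
proof (rule inj_onI)
  fix x y assume "x \<in> X" "y \<in> X" "(2 * x) mod N = (2 * y) mod N"
  then have "N dvd 2 * (x - y)"
    by (simp add: mod_eq_dvd_iff algebra_simps)
  then have "N dvd x - y"
    using odd_dvd_double_iff[OF assms(1)] by blast
  moreover have "x \<in> {1..N - 1}" "y \<in> {1..N - 1}"
    using \<open>x \<in> X\<close> \<open>y \<in> X\<close> assms(2) by blast+
  then have "\<bar>x - y\<bar> < N"
    by auto
  ultimately show "x = y"
    using dvd_imp_le_int[of "x - y" N] by fastforce
qed

lemma card_colour_class:
  fixes N :: int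
  assumes "odd N" and X: "X \<subseteq> {1..N - 1}"
    and X_double: "\<forall>x\<in>X. (2 * x) mod N \<in> X" and X_uminus: "\<forall>x\<in>X. (- x) mod N \<in> X"
    and f_double: "\<forall>x\<in>X. f ((2 * x) mod N) = (\<not> f x)" and f_uminus: "\<forall>x\<in>X. f ((- x) mod N) = f x"
  shows "4 * card {u \<in> X. 2 * u < N \<and> f u} = card X"
proof -
  have fin: "finite A" if "A \<subseteq> X" for A
    using finite_subset[OF _ finite_atLeastAtMost_int] X that by blast
  \<comment> \<open>Doubling swaps the two colours; negation swaps the halves \<open>2 * u < N\<close>, \<open>N < 2 * u\<close>.\<close>
  have "inj_on (\<lambda>x. (2 * x) mod N) X"
    by (rule inj_on_double_mod[OF assms(1) X])
  then have "card {x \<in> X. f x} = card {x \<in> X. \<not> f x}"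
    using X_double f_double fin by (intro card_bij_eq[of "\<lambda>x. (2 * x) mod N" _ _ "\<lambda>x. (2 * x) mod N"])
      (auto intro: inj_on_subset)
  moreover have "card X = card {x \<in> X. f x} + card {x \<in> X. \<not> f x}"
    using fin[of X] by (subst card_Un_disjoint[symmetric]) (auto intro: arg_cong[of _ _ card])
  moreover have "card {x \<in> X. f x} = card {u \<in> X. 2 * u < N \<and> f u} + card {u \<in> X. N < 2 * u \<and> f u}"
  proof -
    have "{x \<in> X. f x} = {u \<in> X. 2 * u < N \<and> f u} \<union> {u \<in> X. N < 2 * u \<and> f u}"
      using \<open>odd N\<close> by (auto, presburger)
    moreover have "{u \<in> X. 2 * u < N \<and> f u} \<inter> {u \<in> X. N < 2 * u \<and> f u} = {}"
      by auto
    ultimately show ?thesis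
      using fin[of "{u \<in> X. 2 * u < N \<and> f u}"] fin[of "{u \<in> X. N < 2 * u \<and> f u}"]
      by (simp add: card_Un_disjoint)
  qed
  moreover have "card {u \<in> X. 2 * u < N \<and> f u} = card {u \<in> X. N < 2 * u \<and> f u}"
  proof -
    have flip: "(- x) mod N = N - x" if "x \<in> X" for x
      using that X by (intro uminus_mod_eq) auto
    show ?thesis
      using X_uminus f_uminus flip fin
      by (intro card_bij_eq[of "\<lambda>x. N - x" _ _ "\<lambda>x. N - x"]) (force intro: inj_onI)+
  qed
  ultimately show ?thesis
    by linarith
qed

lemma pm_doubling_free_quarter:
  fixes N :: int
  assumes "odd N" "X \<subseteq> {1..N - 1}"
    and closed: "\<forall>x\<in>X. (2 * x) mod N \<in> X" "\<forall>x\<in>X. (- x) mod N \<in> X"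
    and "[2 ^ K = 1] (mod N)" "1 \<le> K" "\<forall>x\<in>X. \<forall>j. pm_pow2_cong N j x x \<longrightarrow> even j"
  obtains U where "U \<subseteq> X" "pm_doubling_free N U" "4 * card U = card X"
proof -
  obtain f where f: "\<forall>x\<in>X. f ((2 * x) mod N) = (\<not> f x)" "\<forall>x\<in>X. f ((- x) mod N) = f x"
    using parity_colouring[OF assms(5,6) closed assms(7)] by blast
  show thesis
  proof (rule that)
    show "{u \<in> X. 2 * u < N \<and> f u} \<subseteq> X"
      by blast
    show "pm_doubling_free N {u \<in> X. 2 * u < N \<and> f u}"
      by (rule pm_doubling_free_colour_class[OF assms(2) closed(1) f])
    show "4 * card {u \<in> X. 2 * u < N \<and> f u} = card X"
      by (rule card_colour_class[OF assms(1,2) closed f])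
  qed
qed

lemma pm_pow2_cong_square:
  assumes "pm_pow2_cong n j x x"
  shows "[2 ^ (2 * j) * x = x] (mod n)"
proof -
  obtain s where s: "s \<in> {1, -1}" "[x = s * (2 ^ j * x)] (mod n)"
    using assms unfolding pm_pow2_cong_def by blast
  have "2 ^ (2 * j) * x = 2 ^ j * (s * (s * (2 ^ j * x)))"
    using s(1) by (auto simp: mult_2 power_add)
  moreover have "[2 ^ j * (s * (s * (2 ^ j * x))) = 2 ^ j * (s * x)] (mod n)"
    using s(2) by (simp add: cong_sym_eq cong_scalar_left)
  moreover have "[2 ^ j * (s * x) = x] (mod n)"
    using s(2) by (simp add: cong_sym_eq ac_simps)
  ultimately show ?thesis
    by (metis cong_trans)
qed

lemma pm_pow2_cong_even_of_dvd_pow2_plus_1: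
  assumes "odd n" "[2 ^ k = - 1] (mod n)" "even k" "\<not> n dvd x" "pm_pow2_cong n j x x"
  shows "even j"
proof (rule ccontr)
  assume "odd j"
  have "[2 ^ (2 * k) = (1::int)] (mod n)"
    using cong_mult[OF assms(2) assms(2)] by (simp add: mult_2 power_add)
  then have "[2 ^ (2 * k) * x = x] (mod n)"
    using cong_scalar_right by fastforce
  from pow_cong_gcd[OF pm_pow2_cong_square[OF assms(5)] this]
  have "[2 ^ (2 * gcd j k) * x = x] (mod n)"
    by (simp add: gcd_mult_distrib_nat)
  moreover obtain m where "k = gcd j k * m"
    by (metis gcd_dvd2 dvdE)
  moreover from this have "even m"
    using \<open>odd j\<close> \<open>even k\<close> by (metis even_mult_iff gcd_dvd1 dvd_trans)
  ultimately have "[2 ^ k * x = x] (mod n)"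
    using pow_cong_mult[of 2 "2 * gcd j k" x n "m div 2"] by (auto elim!: evenE simp: ac_simps)
  moreover have "[2 ^ k * x = - x] (mod n)"
    using cong_scalar_right[OF assms(2), of x] by simp
  ultimately have "[x = - x] (mod n)"
    by (metis cong_sym cong_trans)
  then have "n dvd 2 * x"
    by (simp add: cong_iff_dvd_diff)
  then show False
    using odd_dvd_double_iff[OF assms(1)] assms(4) by blast
qed

lemma pm_pow2_cong_even_of_dvd_pow2_pow2_minus_1:
  assumes "[2 ^ (2 ^ t) = 1] (mod n)" "1 \<le> t" "\<not> n dvd 3 * x" "pm_pow2_cong n j x x"
  shows "even j"
proof (rule ccontr)
  assume "odd j"
  have "[2 ^ (2 ^ t) * x = x] (mod n)"
    using cong_scalar_right[OF assms(1)] by fastforce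
  from pow_cong_gcd[OF pm_pow2_cong_square[OF assms(4)] this]
  have "[2 ^ gcd (2 * j) (2 ^ t) * x = x] (mod n)" .
  moreover have "gcd (2 * j) (2 ^ t) = 2"
  proof -
    have "coprime j (2 ^ (t - 1))"
      using \<open>odd j\<close> by simp
    then have "gcd (2 * j) (2 * 2 ^ (t - 1)) = 2"
      by (metis coprime_iff_gcd_eq_1 gcd_mult_distrib_nat mult.right_neutral)
    moreover have "(2::nat) ^ t = 2 * 2 ^ (t - 1)"
      using assms(2) by (simp add: power_eq_if)
    ultimately show ?thesis
      by simp
  qed
  ultimately have "[4 * x = x] (mod n)"
    by simp
  then have "n dvd 3 * x"
    by (simp add: cong_iff_dvd_diff)
  with assms(3) show False ..
qed

lemma nonmultiples_closed:
  fixes N m :: int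
  assumes "odd N" "0 < N"
  defines "X \<equiv> {x \<in> {1..N - 1}. \<not> N dvd m * x}"
  shows "\<forall>x\<in>X. (2 * x) mod N \<in> X" "\<forall>x\<in>X. (- x) mod N \<in> X"
proof -
  have residue: "y mod N \<in> X" if "\<not> N dvd m * y" for y
  proof -
    have "\<not> N dvd m * (y mod N)"
      using that by (simp add: dvd_eq_mod_eq_0 mod_mult_right_eq)
    then have "y mod N \<noteq> 0"
      by auto
    moreover have "0 \<le> y mod N" "y mod N < N"
      using assms(2) by simp_all
    ultimately show ?thesis
      using \<open>\<not> N dvd m * (y mod N)\<close> by (simp add: X_def)
  qed
  have "\<not> N dvd m * (2 * x)" "\<not> N dvd m * (- x)" if "x \<in> X" for x
    using that odd_dvd_double_iff[OF assms(1), of "m * x"] by (auto simp: X_def ac_simps)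
  then show "\<forall>x\<in>X. (2 * x) mod N \<in> X" "\<forall>x\<in>X. (- x) mod N \<in> X"
    using residue by blast+
qed

lemma pm_doubling_free_insert:
  assumes "pm_doubling_free N U" "0 < w" "2 * w < N"
    and "\<forall>v\<in>U. v \<noteq> w \<longrightarrow> w \<noteq> 2 * v \<and> w + 2 * v \<noteq> N \<and> v \<noteq> 2 * w \<and> v + 2 * w \<noteq> N"
  shows "pm_doubling_free N (insert w U)"
  using assms unfolding pm_doubling_free_def by auto

theorem scac_of_dvd_pow2_plus_1:
  fixes n k :: nat
  assumes "odd n" "1 < n" "even k" "int n dvd 2 ^ k + 1"
  obtains C where "is_SCAC (2 * n) 3 C" "4 * card C = n - 1"
proof -
  define N where "N = int n"
  define X where "X = {x \<in> {1..N - 1}. \<not> N dvd 1 * x}"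
  have N: "odd N" "1 < N"
    using assms(1,2) by (simp_all add: N_def)
  have X: "X = {1..N - 1}"
    by (auto simp: X_def zdvd_not_zless)
  have minus_one: "[2 ^ k = - 1] (mod N)"
    using assms(4) by (simp add: cong_iff_dvd_diff N_def)
  have "k \<noteq> 0"
  proof
    assume "k = 0"
    then have "N dvd 2"
      using assms(4) by (simp add: N_def)
    then have "N \<le> 2"
      by (rule zdvd_imp_le) simp
    then show False
      using N by presburger
  qed
  have one: "[2 ^ (2 * k) = 1] (mod N)"
    using cong_mult[OF minus_one minus_one] by (simp add: mult_2 power_add)
  obtain U where "pm_doubling_free N U" "4 * card U = card X"
  proof (rule pm_doubling_free_quarter[OF N(1) _ _ _ one])
    show "X \<subseteq> {1..N - 1}" "1 \<le> 2 * k"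
      using X \<open>k \<noteq> 0\<close> by simp_all
    show "\<forall>x\<in>X. (2 * x) mod N \<in> X" "\<forall>x\<in>X. (- x) mod N \<in> X"
      using nonmultiples_closed[of N 1] N unfolding X_def by simp_all
    show "\<forall>x\<in>X. \<forall>j. pm_pow2_cong N j x x \<longrightarrow> even j"
      using pm_pow2_cong_even_of_dvd_pow2_plus_1[OF N(1) minus_one assms(3)] unfolding X_def by auto
  qed
  moreover have "card X = n - 1"
    unfolding X N_def by simp
  moreover have "int (2 * n) = 2 * N"
    by (simp add: N_def)
  ultimately show thesis
    using that scac_pm_doubling_free_construction[OF _ N(1)] by metis
qed

lemma multiples_of_third_eq:
  fixes w :: int
  assumes "0 < w"
  shows "{x \<in> {1..3 * w - 1}. 3 * w dvd 3 * x} = {w, 2 * w}"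
proof (intro equalityI subsetI)
  fix x assume x: "x \<in> {x \<in> {1..3 * w - 1}. 3 * w dvd 3 * x}"
  then obtain c where c: "x = w * c"
    by auto
  have "0 < x" "x < 3 * w"
    using x by auto
  have "0 < c"
  proof (rule ccontr)
    assume "\<not> 0 < c"
    then have "w * c \<le> w * 0"
      using assms by (intro mult_left_mono) auto
    then show False
      using c \<open>0 < x\<close> by simp
  qed
  moreover have "c < 3"
  proof (rule ccontr)
    assume "\<not> c < 3"
    then have "w * 3 \<le> w * c"
      using assms by (intro mult_left_mono) auto
    then show False
      using c \<open>x < 3 * w\<close> by simp
  qed
  ultimately show "x \<in> {w, 2 * w}"
    using c by auto
qed (use assms in auto)

theorem scac_of_dvd_pow2_pow2_minus_1:
  fixes n t :: nat
  assumes "odd n" "3 dvd n" "3 < n" "1 \<le> t" "int n dvd 2 ^ 2 ^ t - 1"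
  obtains C where "is_SCAC (2 * n) 3 C" "4 * card C = n + 1"
proof -
  define N where "N = int n"
  obtain w where w: "N = 3 * w"
    using assms(2) unfolding N_def by (metis dvdE int_ops(7) of_nat_numeral)
  define X where "X = {x \<in> {1..N - 1}. \<not> N dvd 3 * x}"
  have N: "odd N" "1 < N"
    using assms(1,3) by (simp_all add: N_def)
  have "0 < w"
    using w N by linarith
  have one: "[2 ^ 2 ^ t = 1] (mod N)"
    using assms(5) by (simp add: cong_iff_dvd_diff N_def)
  obtain U where U: "U \<subseteq> X" "pm_doubling_free N U" "4 * card U = card X"
  proof (rule pm_doubling_free_quarter[OF N(1) _ _ _ one])
    show "X \<subseteq> {1..N - 1}" "1 \<le> (2::nat) ^ t"
      by (auto simp: X_def)
    show "\<forall>x\<in>X. (2 * x) mod N \<in> X" "\<forall>x\<in>X. (- x) mod N \<in> X"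
      using nonmultiples_closed[of N 3] N unfolding X_def by simp_all
    show "\<forall>x\<in>X. \<forall>j. pm_pow2_cong N j x x \<longrightarrow> even j"
      using pm_pow2_cong_even_of_dvd_pow2_pow2_minus_1[OF one assms(4)] unfolding X_def by auto
  qed
  have X: "X = {1..N - 1} - {w, 2 * w}"
    using multiples_of_third_eq[OF \<open>0 < w\<close>] unfolding X_def w by blast
  moreover have "{w, 2 * w} \<subseteq> {1..N - 1}" "card {w, 2 * w} = 2"
    using w \<open>0 < w\<close> by auto
  ultimately have "card X + 2 = n - 1"
    using card_Diff_subset[of "{w, 2 * w}" "{1..N - 1}"] assms(3) by (simp add: N_def nat_diff_distrib)
  moreover have "w \<notin> U" "finite U"
    using U(1) X by (auto intro: finite_subset)
  ultimately have card_W: "4 * card (insert w U) = n + 1"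
    using U(3) by simp
  have "pm_doubling_free N (insert w U)"
  proof (rule pm_doubling_free_insert[OF U(2) \<open>0 < w\<close>])
    show "2 * w < N"
      using w \<open>0 < w\<close> by simp
    show "\<forall>v\<in>U. v \<noteq> w \<longrightarrow> w \<noteq> 2 * v \<and> w + 2 * v \<noteq> N \<and> v \<noteq> 2 * w \<and> v + 2 * w \<noteq> N"
    proof (intro ballI impI conjI)
      fix v assume "v \<in> U" "v \<noteq> w"
      then have "\<not> N dvd 3 * v"
        using U(1) by (auto simp: X_def)
      then show "w \<noteq> 2 * v" "v \<noteq> 2 * w"
        using odd_dvd_double_iff[OF N(1), of "3 * v"] w by (auto simp: ac_simps)
      show "w + 2 * v \<noteq> N" "v + 2 * w \<noteq> N"
        using \<open>v \<noteq> w\<close> w by simp_all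
    qed
  qed
  moreover have "int (2 * n) = 2 * N"
    by (simp add: N_def)
  ultimately show thesis
    using that scac_pm_doubling_free_construction[OF _ N(1)] card_W by metis
qed

section \<open>Values of \<open>M_S\<close>\<close>

lemma M_S_eqI:
  assumes "is_SCAC L w C0" "\<And>C. is_SCAC L w C \<Longrightarrow> card C \<le> card C0"
  shows "M_S L w = card C0"
proof -
  have "{card C |C. is_SCAC L w C} \<subseteq> {..card C0}"
    using assms(2) by auto
  then have "finite {card C |C. is_SCAC L w C}"
    by (rule finite_subset) simp
  then show ?thesis
    unfolding M_S_def using assms by (intro Max_eqI) auto
qed

theorem M_S_mod_8:
  assumes "L mod 8 = 4" "12 \<le> L"
  shows "M_S L 3 = (L - 4) div 8"
proof -
  obtain C0 where C0: "is_SCAC L 3 C0" "card C0 = (L - 4) div 8"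
    using scac_mod_8_construction[OF assms(1)] .
  obtain q where q: "L = 8 * q + 4"
    using assms(1) by (metis div_mult_mod_eq mult.commute)
  have "card C \<le> card C0" if "is_SCAC L 3 C" for C
    using four_card_le_half_mod_8[OF that assms] C0(2) unfolding q by simp
  then show ?thesis
    using M_S_eqI[OF C0(1)] C0(2) by simp
qed

theorem M_S_of_dvd_pow2_plus_1:
  fixes n k :: nat
  assumes "odd n" "1 < n" "even k" "int n dvd 2 ^ k + 1"
  shows "M_S (2 * n) 3 = (2 * n - 2) div 8"
proof -
  obtain C0 where C0: "is_SCAC (2 * n) 3 C0" "4 * card C0 = n - 1"
    using scac_of_dvd_pow2_plus_1[OF assms] .
  have "card C \<le> card C0" if "is_SCAC (2 * n) 3 C" for C
    using four_card_le_half[OF that] assms(1,2) C0(2) by simp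
  then show ?thesis
    using M_S_eqI[OF C0(1)] C0(2) by simp
qed

theorem M_S_of_dvd_pow2_pow2_minus_1:
  fixes n t :: nat
  assumes "odd n" "3 dvd n" "3 < n" "1 \<le> t" "int n dvd 2 ^ 2 ^ t - 1"
  shows "M_S (2 * n) 3 = (2 * n + 2) div 8"
proof -
  obtain C0 where C0: "is_SCAC (2 * n) 3 C0" "4 * card C0 = n + 1"
    using scac_of_dvd_pow2_pow2_minus_1[OF assms] .
  have "card C \<le> card C0" if "is_SCAC (2 * n) 3 C" for C
    using four_card_le_half[OF that] assms(3) C0(2) by simp
  then show ?thesis
    using M_S_eqI[OF C0(1)] C0(2) by simp
qed

lemma M_S_pow2_odd_plus_2:
  assumes "1 \<le> t"
  shows "M_S (2 ^ (2 * t + 1) + 2) 3 = (2 ^ (2 * t + 1) + 2 - 2) div 8"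
proof -
  have "odd (2 ^ (2 * t) + 1 :: nat)" "1 < (2 ^ (2 * t) + 1 :: nat)"
    using assms by simp_all
  moreover have "int (2 ^ (2 * t) + 1) dvd 2 ^ (2 * t) + 1"
    by (simp add: add.commute)
  moreover have "(2::nat) ^ (2 * t + 1) + 2 = 2 * (2 ^ (2 * t) + 1)"
    by simp
  ultimately show ?thesis
    using M_S_of_dvd_pow2_plus_1[of "2 ^ (2 * t) + 1" "2 * t"] by simp
qed

text \<open>Sophie Germain's identity \<open>4 * a ^ 4 + 1 = (2 * a\<^sup>2 + 2 * a + 1) * (2 * a\<^sup>2 - 2 * a + 1)\<close> for
  \<open>a = 2 ^ (t - 1)\<close>.\<close>

lemma sophie_germain_pow2:
  fixes t :: nat
  assumes "1 \<le> t"
  defines "A \<equiv> (2::int) ^ (2 * t - 1)" and "B \<equiv> (2::int) ^ t"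
  shows "(A + B + 1) * (A - B + 1) = 2 ^ (4 * t - 2) + 1"
proof -
  have "B * B = 2 * A"
    using assms(1) unfolding A_def B_def by (simp add: power_add[symmetric] power_Suc[symmetric])
  moreover have "A * A = 2 ^ (4 * t - 2)"
    using assms(1) unfolding A_def by (simp add: power_add[symmetric])
  ultimately show ?thesis
    by (simp add: algebra_simps)
qed

lemma M_S_pow2_square_minus:
  assumes "2 \<le> t"
  shows "M_S (2 ^ (2 * t) - 2 ^ (t + 1) + 2) 3 = (2 ^ (2 * t) - 2 ^ (t + 1) + 2 - 2) div 8"
proof -
  define A B :: nat where "A = 2 ^ (2 * t - 1)" and "B = 2 ^ t"
  have "2 * B \<le> A"
    using assms unfolding A_def B_def by (simp add: power_increasing flip: power_Suc)
  have "(2::nat) ^ (2 * t) = 2 * A" "(2::nat) ^ (t + 1) = 2 * B"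
    using assms unfolding A_def B_def by (simp_all flip: power_Suc)
  then have L: "(2::nat) ^ (2 * t) - 2 ^ (t + 1) + 2 = 2 * (A - B + 1)"
    using \<open>2 * B \<le> A\<close> by simp
  have "int (A + B + 1) * int (A - B + 1) = 2 ^ (4 * t - 2) + 1"
    using sophie_germain_pow2[of t] assms \<open>2 * B \<le> A\<close> unfolding A_def B_def
    by (simp add: of_nat_diff ac_simps)
  then have "int (A - B + 1) dvd 2 ^ (4 * t - 2) + 1"
    by (metis dvd_triv_right)
  moreover have "odd (A - B + 1)" "1 < A - B + 1"
    using assms \<open>2 * B \<le> A\<close> unfolding A_def B_def by simp_all
  ultimately show ?thesis
    unfolding L by (intro M_S_of_dvd_pow2_plus_1) simp_all
qed

lemma M_S_pow2_square_plus:
  assumes "1 \<le> t"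
  shows "M_S (2 ^ (2 * t) + 2 ^ (t + 1) + 2) 3 = (2 ^ (2 * t) + 2 ^ (t + 1) + 2 - 2) div 8"
proof -
  define A B :: nat where "A = 2 ^ (2 * t - 1)" and "B = 2 ^ t"
  have "(2::nat) ^ (2 * t) = 2 * A" "(2::nat) ^ (t + 1) = 2 * B"
    using assms unfolding A_def B_def by (simp_all flip: power_Suc)
  then have L: "(2::nat) ^ (2 * t) + 2 ^ (t + 1) + 2 = 2 * (A + B + 1)"
    by simp
  have "2 ^ t \<le> (2::nat) ^ (2 * t - 1)"
    using assms by (intro power_increasing) simp_all
  then have "int (A + B + 1) * int (A - B + 1) = 2 ^ (4 * t - 2) + 1"
    using sophie_germain_pow2[of t] assms unfolding A_def B_def by (simp add: of_nat_diff ac_simps)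
  then have "int (A + B + 1) dvd 2 ^ (4 * t - 2) + 1"
    by (metis dvd_triv_left)
  moreover have "odd (A + B + 1)" "1 < A + B + 1"
    using assms unfolding A_def B_def by simp_all
  ultimately show ?thesis
    unfolding L by (intro M_S_of_dvd_pow2_plus_1) simp_all
qed

lemma M_S_pow2_pow2_minus_2:
  assumes "2 \<le> t"
  shows "M_S (2 ^ (2 ^ t + 1) - 2) 3 = (2 ^ (2 ^ t + 1) - 2 + 2) div 8"
proof -
  define n :: nat where "n = 2 ^ 2 ^ t - 1"
  have "(4::nat) \<le> 2 ^ t"
    using power_increasing[OF assms, of "2::nat"] by simp
  then have "(16::nat) \<le> 2 ^ 2 ^ t"
    using power_increasing[of 4 "2 ^ t" "2::nat"] by simp
  then have L: "(2::nat) ^ (2 ^ t + 1) - 2 = 2 * n" and "3 < n" "odd n"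
    unfolding n_def by simp_all
  moreover have "3 dvd n"
  proof -
    have "(2::nat) ^ t = 2 * 2 ^ (t - 1)"
      using assms by (simp add: power_eq_if)
    then have "(2::nat) ^ 2 ^ t = 4 ^ 2 ^ (t - 1)"
      by (simp add: power_mult)
    moreover have "[4 ^ 2 ^ (t - 1) = 1 ^ 2 ^ (t - 1)] (mod (3::nat))"
      by (rule cong_pow) (simp add: cong_def)
    ultimately have "[2 ^ 2 ^ t = 1] (mod (3::nat))"
      by simp
    then show ?thesis
      unfolding n_def by (simp add: cong_altdef_nat)
  qed
  moreover have "int n dvd 2 ^ 2 ^ t - 1"
    using \<open>16 \<le> 2 ^ 2 ^ t\<close> unfolding n_def by (simp add: of_nat_diff)
  ultimately show ?thesis
    unfolding L using assms by (intro M_S_of_dvd_pow2_pow2_minus_1) simp_all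
qed

theorem mainTheorem9:
  fixes L :: nat
  assumes "L \<ge> 18"
  shows "(L mod 8 = 4 \<longrightarrow> M_S L 3 = (L - 4) div 8)
    \<and> (((\<exists>t::nat. t \<ge> 1 \<and> L = 2^(2*t+1) + 2)
         \<or> (\<exists>t::nat. t \<ge> 2 \<and> L = 2^(2*t) - 2^(t+1) + 2)
         \<or> (\<exists>t::nat. t \<ge> 1 \<and> L = 2^(2*t) + 2^(t+1) + 2))
        \<longrightarrow> M_S L 3 = (L - 2) div 8)
    \<and> ((\<exists>t::nat. t \<ge> 2 \<and> L = 2^(2^t+1) - 2) \<longrightarrow> M_S L 3 = (L + 2) div 8)"
  using assms M_S_mod_8 M_S_pow2_odd_plus_2 M_S_pow2_square_minus M_S_pow2_square_plus
    M_S_pow2_pow2_minus_2 by auto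

end
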